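(* Let $N,K,s$ be integers with $1<K<N$, $s\ge 2$, set $\epsilon=1/N$, let $\phi:(0,\infty)\to\mathbb{R}$ be continuously differentiable, $F>0$, and let $\mathcal{E}^{qnl}$ be the generalized quasi-nonlocal energy defined below. Then the uniform deformation $\mathbf y_F$ has no ghost forces: $\langle\delta\mathcal{E}^{qnl}(\mathbf{y}_F),\mathbf{w}\rangle=0$ for all $\mathbf{w}\in\mathcal{U}$, i.e. all forces $-\partial\mathcal{E}^{qnl}/\partial y_\ell$ vanish at $\mathbf y_F$.
   Context: $\mathcal{U}$ is the space of real sequences $\mathbf u=(u_\ell)_{\ell\in\mathbb{Z}}$ with $u_{\ell+2N}=u_\ell$ and $\sum_{\ell=-N+1}^{N}u_\ell=0$. $(\mathbf y_F)_\ell=F\epsilon\ell$, and admissible deformations are $\mathbf y=\mathbf y_F+\mathbf u$, $\mathbf u\in\mathcal U$. For a sequence $\mathbf v$, $v'_\ell=(v_\ell-v_{\ell-1})/\epsilon$. For $k=2,\dots,s$ let $\mathcal{A}_{qnl}(k)=\{-K-k+1,\dots,K+1\}$ and $\mathcal{C}_{qnl}(k)=\{-N+1,\dots,-K-k\}\cup\{K+2,\dots,N\}$. The generalized QNL energy is $$\mathcal{E}^{qnl}(\mathbf y)=\epsilon\sum_{\ell=-N+1}^{N}\phi(y'_\ell)+\epsilon\sum_{k=2}^{s}\sum_{\ell\in\mathcal{A}_{qnl}(k)}\phi\Big(\sum_{j=0}^{k-1}y'_{\ell+j}\Big)+\epsilon\sum_{k=2}^{s}\sum_{\ell\in\mathcal{C}_{qnl}(k)}\frac1k\sum_{j=0}^{k-1}\phi(k\,y'_{\ell+j}),$$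 and $\langle\delta\mathcal{E}^{qnl}(\mathbf y),\mathbf w\rangle=\frac{d}{dt}\mathcal{E}^{qnl}(\mathbf y+t\mathbf w)|_{t=0}$. *)

theory Defs
  imports Complex_Main
begin

definition eps :: "int \<Rightarrow> real" where
  "eps N = 1 / real_of_int N"

definition Uspace :: "int \<Rightarrow> (int \<Rightarrow> real) set" where
  "Uspace N = {u. (\<forall>l. u (l + 2 * N) = u l) \<and> (\<Sum>l\<in>{-N+1..N}. u l) = 0}"

definition yF :: "int \<Rightarrow> real \<Rightarrow> int \<Rightarrow> real" where
  "yF N F l = F * eps N * real_of_int l"

definition dq :: "int \<Rightarrow> (int \<Rightarrow> real) \<Rightarrow> int \<Rightarrow> real" where
  "dq N v l = (v l - v (l - 1)) / eps N"

definition Aqnl :: "int \<Rightarrow> int \<Rightarrow> int set" where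
  "Aqnl K k = {-K-k+1..K+1}"

definition Cqnl :: "int \<Rightarrow> int \<Rightarrow> int \<Rightarrow> int set" where
  "Cqnl N K k = {-N+1..-K-k} \<union> {K+2..N}"

definition Eqnl :: "int \<Rightarrow> int \<Rightarrow> int \<Rightarrow> (real \<Rightarrow> real) \<Rightarrow> (int \<Rightarrow> real) \<Rightarrow> real" where
  "Eqnl N K s \<phi> y =
     eps N * (\<Sum>l\<in>{-N+1..N}. \<phi> (dq N y l))
   + eps N * (\<Sum>k\<in>{2..s}. \<Sum>l\<in>Aqnl K k. \<phi> (\<Sum>j\<in>{0..k-1}. dq N y (l + j)))
   + eps N * (\<Sum>k\<in>{2..s}. \<Sum>l\<in>Cqnl N K k.
        (1 / real_of_int k) * (\<Sum>j\<in>{0..k-1}. \<phi> (real_of_int k * dq N y (l + j))))"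

end

theory Submission
  imports Defs
begin

(* At the uniform state every k-bond has length kF, so the first variation of a
   Cauchy-Born term (1/k) sum_j \<phi>(k y'(l+j)) equals that of the atomistic term
   \<phi>(sum_j y'(l+j)), namely \<phi>'(kF) sum_j w'(l+j). Since A(k) and C(k) partition a
   period, the first variation of the QNL energy at y_F is that of the fully nonlocal
   energy, \<epsilon> (\<phi>'(F) sum_l w'(l) + sum_k \<phi>'(kF) sum_j sum_l w'(l+j)), and every sum
   of w' over a full period telescopes to 0 by periodicity of w. *)

lemma sum_backward_diff_int_telescope:
  fixes g :: "int \<Rightarrow> 'a::ab_group_add"
  assumes "a \<le> b"
  shows "(\<Sum>l\<in>{a+1..b}. g l - g (l - 1)) = g b - g a"
  using assms
proof (induction b rule: int_ge_induct)
  case base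
  then show ?case by simp
next
  case (step b)
  have "{a+1..b+1} = insert (b+1) {a+1..b}" using step.hyps by auto
  then show ?case using step by simp
qed

lemma sum_backward_diff_periodic:
  fixes g :: "int \<Rightarrow> 'a::ab_group_add"
  assumes "\<And>l. g (l + p) = g l"
  shows "(\<Sum>l\<in>{a+1..a+p}. g l - g (l - 1)) = 0"
proof (cases "0 \<le> p")
  case True
  then show ?thesis using sum_backward_diff_int_telescope[of a "a + p" g] assms[of a] by simp
qed simp

lemma sum_dq_period_eq_0:
  assumes "\<And>l. w (l + 2 * N) = w l"
  shows "(\<Sum>l\<in>{-N+1..N}. dq N w (l + j)) = 0"
proof -
  have "(\<Sum>l\<in>{-N+1..N}. dq N w (l + j)) = (\<Sum>l\<in>{(j-N)+1..(j-N)+2*N}. dq N w l)"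
    by (rule sym, rule sum.reindex_cong[of "\<lambda>l. l + j"]) (simp_all add: inj_on_def)
  also have "\<dots> = (\<Sum>l\<in>{(j-N)+1..(j-N)+2*N}. w l - w (l - 1)) / eps N"
    by (simp add: dq_def sum_divide_distrib)
  also have "\<dots> = 0" using sum_backward_diff_periodic[of w "2 * N" "j - N", OF assms] by simp
  finally show ?thesis .
qed

lemma has_real_derivative_sum_along_line:
  assumes "(\<phi> has_real_derivative D) (at c)"
  shows "((\<lambda>t. \<Sum>l\<in>S. \<phi> (c + t * d l)) has_real_derivative D * sum d S) (at 0)"
proof -
  have "((\<lambda>t. \<phi> (c + t * d l)) has_real_derivative D * d l) (at 0)" for l
  proof (rule DERIV_chain2[where f = \<phi>])
    show "(\<phi> has_real_derivative D) (at (c + 0 * d l))" using assms by simp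
    show "((\<lambda>t. c + t * d l) has_real_derivative d l) (at 0)" by (auto intro!: derivative_eq_intros)
  qed
  then show ?thesis by (auto intro: DERIV_sum simp: sum_distrib_left)
qed

lemma has_real_derivative_atomistic_bonds:
  fixes k :: int and F :: real
  assumes "0 \<le> k" and "(\<phi> has_real_derivative D) (at (k * F))"
  shows "((\<lambda>t. \<Sum>l\<in>S. \<phi> (\<Sum>j\<in>{0..k-1}. F + t * d (l + j)))
           has_real_derivative D * (\<Sum>l\<in>S. \<Sum>j\<in>{0..k-1}. d (l + j))) (at 0)"
proof -
  have "(\<Sum>j\<in>{0..k-1}. F + t * d (l + j)) = k * F + t * (\<Sum>j\<in>{0..k-1}. d (l + j))" for t l
    using assms(1) by (simp add: sum.distrib sum_distrib_left)
  then show ?thesis using has_real_derivative_sum_along_line[OF assms(2)] by simp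
qed

lemma has_real_derivative_cauchy_born_bonds:
  fixes k :: int and F :: real
  assumes "k \<noteq> 0" and "(\<phi> has_real_derivative D) (at (k * F))"
  shows "((\<lambda>t. \<Sum>l\<in>S. 1 / k * (\<Sum>j\<in>{0..k-1}. \<phi> (k * (F + t * d (l + j)))))
           has_real_derivative D * (\<Sum>l\<in>S. \<Sum>j\<in>{0..k-1}. d (l + j))) (at 0)"
proof -
  have "((\<lambda>t. \<Sum>j\<in>{0..k-1}. \<phi> (k * F + t * (k * d (l + j))))
          has_real_derivative D * (\<Sum>j\<in>{0..k-1}. k * d (l + j))) (at 0)" for l
    by (rule has_real_derivative_sum_along_line[OF assms(2)])
  then have "((\<lambda>t. 1 / k * (\<Sum>j\<in>{0..k-1}. \<phi> (k * F + t * (k * d (l + j)))))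
          has_real_derivative 1 / k * (D * (\<Sum>j\<in>{0..k-1}. k * d (l + j)))) (at 0)" for l
    by (rule DERIV_cmult)
  moreover have "k * (F + t * x) = k * F + t * (k * x)" for t x :: real
    by (simp add: algebra_simps)
  moreover have "1 / k * (D * (\<Sum>j\<in>{0..k-1}. k * d (l + j)))
      = D * (\<Sum>j\<in>{0..k-1}. d (l + j))" for l
    using assms(1) by (simp add: sum_distrib_left[symmetric])
  ultimately have "((\<lambda>t. 1 / k * (\<Sum>j\<in>{0..k-1}. \<phi> (k * (F + t * d (l + j)))))
          has_real_derivative D * (\<Sum>j\<in>{0..k-1}. d (l + j))) (at 0)" for l
    by simp
  then show ?thesis by (auto intro: DERIV_sum simp: sum_distrib_left)
qed

lemma sum_Aqnl_Cqnl:
  assumes "0 \<le> K" and "1 \<le> k" and "K + k \<le> N"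
  shows "(\<Sum>l\<in>Aqnl K k. f l) + (\<Sum>l\<in>Cqnl N K k. f l) = (\<Sum>l\<in>{-N+1..N}. f l)"
proof -
  have "Aqnl K k \<union> Cqnl N K k = {-N+1..N}" and "Aqnl K k \<inter> Cqnl N K k = {}"
    using assms unfolding Aqnl_def Cqnl_def by auto
  then show ?thesis by (metis finite_atLeastAtMost_int finite_Un sum.union_disjoint)
qed

lemma dq_yF_line:
  assumes "N \<noteq> 0"
  shows "dq N (\<lambda>l. yF N F l + t * w l) = (\<lambda>l. F + t * dq N w l)"
  using assms by (auto simp: dq_def yF_def eps_def field_simps)

lemma has_real_derivative_Eqnl_yF_line:
  assumes "0 < N" and "0 \<le> K" and "K + s \<le> N" and "0 < F"
    and \<phi>': "\<And>x. 0 < x \<Longrightarrow> (\<phi> has_real_derivative \<phi>' x) (at x)"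
  shows "((\<lambda>t. Eqnl N K s \<phi> (\<lambda>l. yF N F l + t * w l)) has_real_derivative
      eps N * (\<phi>' F * (\<Sum>l\<in>{-N+1..N}. dq N w l)
        + (\<Sum>k\<in>{2..s}. \<phi>' (k * F) * (\<Sum>l\<in>{-N+1..N}. \<Sum>j\<in>{0..k-1}. dq N w (l + j))))) (at 0)"
proof -
  define a where "a = dq N w"
  define bonds where "bonds k t =
      (\<Sum>l\<in>Aqnl K k. \<phi> (\<Sum>j\<in>{0..k-1}. F + t * a (l + j)))
    + (\<Sum>l\<in>Cqnl N K k. 1 / k * (\<Sum>j\<in>{0..k-1}. \<phi> (k * (F + t * a (l + j)))))" for k t
  have "(bonds k has_real_derivative \<phi>' (k * F) * (\<Sum>l\<in>{-N+1..N}. \<Sum>j\<in>{0..k-1}. a (l + j))) (at 0)"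
    if "k \<in> {2..s}" for k
  proof -
    have \<phi>'_kF: "(\<phi> has_real_derivative \<phi>' (k * F)) (at (k * F))"
      using that assms(4) by (intro \<phi>') simp
    have "(bonds k has_real_derivative \<phi>' (k * F) * (\<Sum>l\<in>Aqnl K k. \<Sum>j\<in>{0..k-1}. a (l + j))
        + \<phi>' (k * F) * (\<Sum>l\<in>Cqnl N K k. \<Sum>j\<in>{0..k-1}. a (l + j))) (at 0)"
      unfolding bonds_def using that
      by (intro DERIV_add has_real_derivative_atomistic_bonds[OF _ \<phi>'_kF]
          has_real_derivative_cauchy_born_bonds[OF _ \<phi>'_kF]) auto
    then show ?thesis using that assms(2,3) by (simp add: sum_Aqnl_Cqnl flip: distrib_left)
  qed
  moreover have "Eqnl N K s \<phi> (\<lambda>l. yF N F l + t * w l)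
      = eps N * (\<Sum>l\<in>{-N+1..N}. \<phi> (F + t * a l)) + eps N * (\<Sum>k\<in>{2..s}. bonds k t)" for t
    using assms(1) unfolding Eqnl_def bonds_def a_def
    by (simp add: dq_yF_line sum.distrib distrib_left)
  moreover have "(\<phi> has_real_derivative \<phi>' F) (at F)" using \<phi>' assms(4) by simp
  ultimately show ?thesis unfolding a_def
    by (auto intro!: DERIV_add DERIV_cmult DERIV_sum has_real_derivative_sum_along_line simp: distrib_left)
qed

theorem proposition4p1:
  fixes N K s :: int and \<phi> :: "real \<Rightarrow> real" and F :: real
  assumes "1 < K" and "K < N" and "2 \<le> s"
    and "K + s \<le> N"
    and "\<exists>\<phi>'. continuous_on {0<..} \<phi>' \<and> (\<forall>x>0. (\<phi> has_real_derivative \<phi>' x) (at x))"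
    and "0 < F"
  shows "\<forall>w\<in>Uspace N.
           ((\<lambda>t. Eqnl N K s \<phi> (\<lambda>l. yF N F l + t * w l)) has_real_derivative 0) (at 0)"
proof
  fix w assume "w \<in> Uspace N"
  then have periodic_sum: "(\<Sum>l\<in>{-N+1..N}. dq N w (l + j)) = 0" for j
    by (intro sum_dq_period_eq_0) (simp add: Uspace_def)
  then have "(\<Sum>l\<in>{-N+1..N}. dq N w l) = 0"
    and "(\<Sum>l\<in>{-N+1..N}. \<Sum>j\<in>{0..k-1}. dq N w (l + j)) = 0" for k
    using periodic_sum[of 0] by (simp, subst sum.swap, simp)
  moreover obtain \<phi>' where "\<And>x. 0 < x \<Longrightarrow> (\<phi> has_real_derivative \<phi>' x) (at x)"
    using assms(5) by blast
  ultimately show "((\<lambda>t. Eqnl N K s \<phi> (\<lambda>l. yF N F l + t * w l)) has_real_derivative 0) (at 0)"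
    using has_real_derivative_Eqnl_yF_line[of N K s F \<phi> \<phi>' w] assms by simp
qed

end
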